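(* Let $\mathcal{S}$ be a category with $\Delta_1^*\subset\mathcal{S}\subset\mathbf{Pos}$ subcategories and $\Delta_1^*$ wide in $\mathcal{S}$. The following are equivalent: (1) every $\mathcal{S}$-morphism maps each $1$-dimensional interval onto an interval; (2) $\mathcal{S}$ does not contain the diagonal $[1]\to[1]^2$, $x\mapsto(x,x)$.
   Context: $[1]=\{0<1\}$, $[1]^n$ the product poset with componentwise order ($[1]^0=[0]$). An interval in a poset $P$ is a non-empty subset $[x,z]_P=\{y:x\leq y\leq z\}$; a $1$-dimensional interval in $[1]^n$ is one isomorphic to $[1]$, i.e. $\{x,y\}$ with $x<y$ differing in exactly one coordinate. $\Delta_1^*$ is the smallest subcategory of $\mathbf{Set}$ containing all functions between $[0]$ and $[1]$ and closed under Cartesian products of functions; its objects are the $[1]^n$ and it is generated by cofaces and codegeneracies (coordinate projections). "Wide" means $\mathcal{S}$ has the same objects as $\Delta_1^*$. $\mathbf{Pos}$ is the category of posets and monotone functions. *)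

theory Defs
  imports Main
begin

text \<open>The cube [1]^n is represented by boolean lists of length n (False < True),
  ordered componentwise.\<close>

definition cube :: "nat \<Rightarrow> bool list set" where
  "cube n = {xs. length xs = n}"

definition cleq :: "bool list \<Rightarrow> bool list \<Rightarrow> bool" where
  "cleq xs ys \<longleftrightarrow> list_all2 (\<le>) xs ys"

definition maps_cube :: "nat \<Rightarrow> nat \<Rightarrow> (bool list \<Rightarrow> bool list) \<Rightarrow> bool" where
  "maps_cube m n f \<longleftrightarrow> (\<forall>x\<in>cube m. f x \<in> cube n)"

definition mono_cube :: "nat \<Rightarrow> (bool list \<Rightarrow> bool list) \<Rightarrow> bool" where
  "mono_cube m f \<longleftrightarrow> (\<forall>x\<in>cube m. \<forall>y\<in>cube m. cleq x y \<longrightarrow> cleq (f x) (f y))"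

text \<open>Two functions represent the same morphism out of [1]^m.\<close>
definition agree :: "nat \<Rightarrow> (bool list \<Rightarrow> bool list) \<Rightarrow> (bool list \<Rightarrow> bool list) \<Rightarrow> bool" where
  "agree m f g \<longleftrightarrow> (\<forall>x\<in>cube m. f x = g x)"

text \<open>Delta_1^*: the smallest subcategory containing the (monotone) maps between [0] and [1]
  and closed under Cartesian products of maps ([1]^a x [1]^c identified with [1]^(a+c)
  by concatenation).\<close>
inductive delta1star :: "nat \<Rightarrow> nat \<Rightarrow> (bool list \<Rightarrow> bool list) \<Rightarrow> bool" where
  gen: "a \<le> 1 \<Longrightarrow> b \<le> 1 \<Longrightarrow> maps_cube a b f \<Longrightarrow> mono_cube a f \<Longrightarrow> delta1star a b f"
| ident: "delta1star n n id"
| comp: "delta1star m n f \<Longrightarrow> delta1star n k g \<Longrightarrow> delta1star m k (g \<circ> f)"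
| prod: "delta1star a b f \<Longrightarrow> delta1star c d g \<Longrightarrow>
          delta1star (a + c) (b + d) (\<lambda>xs. f (take a xs) @ g (drop a xs))"

text \<open>S (a wide subcategory of Pos on the objects [1]^n) given by a predicate on
  hom-sets; functions are considered only on their domain cube.\<close>
definition cube_cat :: "(nat \<Rightarrow> nat \<Rightarrow> (bool list \<Rightarrow> bool list) \<Rightarrow> bool) \<Rightarrow> bool" where
  "cube_cat S \<longleftrightarrow>
     (\<forall>m n f. S m n f \<longrightarrow> maps_cube m n f \<and> mono_cube m f) \<and>
     (\<forall>m n k f g. S m n f \<longrightarrow> S n k g \<longrightarrow> (\<exists>h. S m k h \<and> agree m h (g \<circ> f))) \<and>
     (\<forall>m n f. delta1star m n f \<longrightarrow> (\<exists>g. S m n g \<and> agree m g f))"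

definition one_dim_interval :: "nat \<Rightarrow> bool list \<Rightarrow> bool list \<Rightarrow> bool" where
  "one_dim_interval m x y \<longleftrightarrow> x \<in> cube m \<and> y \<in> cube m \<and> cleq x y \<and> x \<noteq> y \<and>
     card {i. i < m \<and> x ! i \<noteq> y ! i} = 1"

definition is_interval :: "nat \<Rightarrow> bool list set \<Rightarrow> bool" where
  "is_interval n A \<longleftrightarrow> (\<exists>a\<in>cube n. \<exists>c\<in>cube n. cleq a c \<and>
      A = {b\<in>cube n. cleq a b \<and> cleq b c})"

end

theory Submission
  imports Defs
begin

(* A monotone map sends a 1-dimensional interval x < y to a pair f x \<le> f y, which is an
   interval unless f x and f y differ in two coordinates i < j. In that case the line
   [1] \<rightarrow> [1]^m through x and y, followed by f and by the projection [1]^n \<rightarrow> [1]^2 onto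
   the coordinates i and j, is the diagonal; the line and the projection lie in \<Delta>_1^*, so the
   diagonal lies in S. Conversely, the diagonal maps [0] < [1] onto {00, 11}, which is no
   interval. *)

lemma cleq_iff_nth:
  "cleq xs ys \<longleftrightarrow> length xs = length ys \<and> (\<forall>i<length xs. xs ! i \<le> ys ! i)"
  by (simp add: cleq_def list_all2_conv_all_nth)

lemma cube_interval_eq_endpoints:
  assumes a: "a \<in> cube n" and ac: "cleq a c"
    and at_most_one: "\<And>i j. i < n \<Longrightarrow> j < n \<Longrightarrow> a ! i \<noteq> c ! i \<Longrightarrow> a ! j \<noteq> c ! j \<Longrightarrow> i = j"
  shows "{b \<in> cube n. cleq a b \<and> cleq b c} = {a, c}"
proof (intro equalityI subsetI)
  fix b assume "b \<in> {b \<in> cube n. cleq a b \<and> cleq b c}"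
  then have b: "length b = n" and ab: "cleq a b" and bc: "cleq b c" by (auto simp: cube_def)
  have len: "length a = n" "length c = n" using a ac by (auto simp: cube_def cleq_iff_nth)
  show "b \<in> {a, c}"
  proof (rule ccontr)
    assume "b \<notin> {a, c}"
    then have "b \<noteq> a" "b \<noteq> c" by auto
    then have "\<exists>i<n. b ! i \<noteq> a ! i" "\<exists>j<n. b ! j \<noteq> c ! j"
      using b len by (auto intro: nth_equalityI)
    then obtain i j where i: "i < n" "b ! i \<noteq> a ! i" and j: "j < n" "b ! j \<noteq> c ! j"
      by blast
    have "\<not> a ! i" "b ! i" "c ! i" "\<not> a ! j" "\<not> b ! j" "c ! j"
      using i j ab bc b len by (auto simp: cleq_iff_nth le_bool_def)
    moreover have "i = j" using at_most_one i(1) j(1) calculation by auto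
    ultimately show False by simp
  qed
next
  fix b assume "b \<in> {a, c}"
  then show "b \<in> {b \<in> cube n. cleq a b \<and> cleq b c}"
    using a ac by (auto simp: cube_def cleq_iff_nth)
qed

lemma is_interval_endpoints:
  assumes "a \<in> cube n" "cleq a c"
    and "\<And>i j. i < n \<Longrightarrow> j < n \<Longrightarrow> a ! i \<noteq> c ! i \<Longrightarrow> a ! j \<noteq> c ! j \<Longrightarrow> i = j"
  shows "is_interval n {a, c}"
proof -
  have "c \<in> cube n" using assms(1,2) by (simp add: cube_def cleq_iff_nth)
  then show ?thesis
    unfolding is_interval_def using assms cube_interval_eq_endpoints[OF assms] by blast
qed

lemma diagonal_not_interval: "\<not> is_interval 2 {[False, False], [True, True]}"
proof
  assume "is_interval 2 {[False, False], [True, True]}"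
  then obtain a c
    where ac: "{[False, False], [True, True]} = {b \<in> cube 2. cleq a b \<and> cleq b c}"
    unfolding is_interval_def by (elim bexE conjE) (rule that)
  have "[False, False] \<in> {b \<in> cube 2. cleq a b \<and> cleq b c}"
    and "[True, True] \<in> {b \<in> cube 2. cleq a b \<and> cleq b c}"
    unfolding ac[symmetric] by simp_all
  then have "cleq a [False, True]" "cleq [False, True] c"
    by (auto simp: cleq_def list_all2_Cons1 list_all2_Cons2)
  then have "[False, True] \<in> {b \<in> cube 2. cleq a b \<and> cleq b c}"
    by (simp add: cube_def)
  then show False unfolding ac[symmetric] by simp
qed

lemma one_dim_interval_unit: "one_dim_interval 1 [False] [True]"
proof -
  have "{i. i < (1::nat) \<and> [False] ! i \<noteq> [True] ! i} = {0}" by auto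
  then show ?thesis by (simp add: one_dim_interval_def cube_def cleq_def)
qed

lemma one_dim_interval_update:
  assumes "one_dim_interval m x y"
  obtains k where "k < m" "\<not> x ! k" "y = x[k := True]"
proof -
  have len: "length x = m" "length y = m" and xy: "cleq x y"
    and "card {i. i < m \<and> x ! i \<noteq> y ! i} = 1"
    using assms by (auto simp: one_dim_interval_def cube_def)
  then obtain k where k: "{i. i < m \<and> x ! i \<noteq> y ! i} = {k}"
    by (elim card_1_singletonE)
  then have km: "k < m" and "x ! k \<noteq> y ! k"
    and same: "\<And>i. i < m \<Longrightarrow> i \<noteq> k \<Longrightarrow> x ! i = y ! i" by blast+
  moreover have "x ! k \<le> y ! k" using xy km len by (simp add: cleq_iff_nth)
  ultimately have "\<not> x ! k" "y ! k" by auto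
  moreover have "y = x[k := True]"
  proof (rule nth_equalityI)
    show "length y = length (x[k := True])" using len by simp
    fix i assume "i < length y"
    then show "y ! i = x[k := True] ! i" using len same \<open>y ! k\<close> by (cases "i = k") auto
  qed
  ultimately show thesis using that km by blast
qed

definition represented :: "(nat \<Rightarrow> nat \<Rightarrow> (bool list \<Rightarrow> bool list) \<Rightarrow> bool) \<Rightarrow>
    nat \<Rightarrow> nat \<Rightarrow> (bool list \<Rightarrow> bool list) \<Rightarrow> bool" where
  "represented S m n f \<longleftrightarrow> (\<exists>g. S m n g \<and> agree m g f)"

lemma represented_hom: "S m n f \<Longrightarrow> represented S m n f"
  by (auto simp: represented_def agree_def)

lemma represented_agree: "represented S m n f \<Longrightarrow> agree m f g \<Longrightarrow> represented S m n g"
  by (auto simp: represented_def agree_def)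

lemma represented_delta1star: "cube_cat S \<Longrightarrow> delta1star m n f \<Longrightarrow> represented S m n f"
  by (simp add: cube_cat_def represented_def)

lemma cube_cat_hom_mono:
  assumes "cube_cat S" "S m n f" "x \<in> cube m" "y \<in> cube m" "cleq x y"
  shows "f x \<in> cube n" "f y \<in> cube n" "cleq (f x) (f y)"
  using assms by (auto simp: cube_cat_def maps_cube_def mono_cube_def)

lemma represented_comp:
  assumes S: "cube_cat S" and "represented S m n f" "represented S n k g"
  shows "represented S m k (g \<circ> f)"
proof -
  obtain f' g' where f': "S m n f'" "agree m f' f" and g': "S n k g'" "agree n g' g"
    using assms(2,3) by (auto simp: represented_def)
  obtain h where h: "S m k h" "agree m h (g' \<circ> f')"
    using S f'(1) g'(1) unfolding cube_cat_def by blast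
  have "h z = g (f z)" if "z \<in> cube m" for z
  proof -
    have "f' z \<in> cube n" using S f'(1) that by (auto simp: cube_cat_def maps_cube_def)
    then show ?thesis using f'(2) g'(2) h(2) that by (simp add: agree_def)
  qed
  with h(1) show ?thesis by (auto simp: represented_def agree_def)
qed

lemma delta1star_prodI:
  assumes "delta1star a b f" "delta1star c d g" "m = a + c" "n = b + d"
    and "\<And>xs. h xs = f (take a xs) @ g (drop a xs)"
  shows "delta1star m n h"
proof -
  have "h = (\<lambda>xs. f (take a xs) @ g (drop a xs))" using assms(5) by (rule ext)
  then show ?thesis using delta1star.prod[OF assms(1,2)] assms(3,4) by simp
qed

lemma delta1star_const: "delta1star 0 (length c) (\<lambda>_. c)"
proof (induction c)
  case Nil
  show ?case
    by (rule delta1star.gen) (auto simp: maps_cube_def mono_cube_def cube_def cleq_def)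
next
  case (Cons b c)
  have "delta1star 0 1 (\<lambda>_. [b])"
    by (rule delta1star.gen) (auto simp: maps_cube_def mono_cube_def cube_def cleq_def)
  from delta1star_prodI[OF this Cons.IH] show ?case by simp
qed

lemma delta1star_terminal: "delta1star n 0 (\<lambda>_. [])"
proof (induction n)
  case 0
  show ?case using delta1star_const[of "[]"] by simp
next
  case (Suc n)
  have "delta1star 1 0 (\<lambda>_. [])"
    by (rule delta1star.gen) (auto simp: maps_cube_def mono_cube_def cube_def cleq_def)
  from delta1star_prodI[OF this Suc.IH] show ?case by simp
qed

lemma delta1star_take_nth:
  assumes "i < n"
  shows "delta1star n 1 (\<lambda>xs. take 1 (drop i xs))"
proof -
  have "delta1star (n - i) 1 (\<lambda>xs. take 1 xs)"
    by (rule delta1star_prodI[OF delta1star.ident delta1star_terminal[of "n - i - 1"]])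
      (use assms in auto)
  then show ?thesis
    by (rule delta1star_prodI[OF delta1star_terminal[of i]]) (use assms in auto)
qed

lemma delta1star_take_pair:
  assumes "i < j" "j < n"
  shows "delta1star n 2 (\<lambda>xs. take 1 (drop i xs) @ take 1 (drop j xs))"
  by (rule delta1star_prodI[OF delta1star_take_nth[OF assms(1)]
        delta1star_take_nth[of 0 "n - j"]]) (use assms in \<open>auto simp: drop_take min_def\<close>)

lemma take_Suc_0_drop: "i < length xs \<Longrightarrow> take (Suc 0) (drop i xs) = [xs ! i]"
  by (simp add: Cons_nth_drop_Suc[symmetric])

(* \<Delta>_1^* contains no permutation of coordinates, hence the order i < j. *)
lemma represented_pair:
  assumes "cube_cat S" "i < j" "j < n"
  shows "represented S n 2 (\<lambda>xs. [xs ! i, xs ! j])"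
proof (rule represented_agree)
  show "represented S n 2 (\<lambda>xs. take 1 (drop i xs) @ take 1 (drop j xs))"
    by (rule represented_delta1star[OF assms(1) delta1star_take_pair[OF assms(2,3)]])
  show "agree n (\<lambda>xs. take 1 (drop i xs) @ take 1 (drop j xs)) (\<lambda>xs. [xs ! i, xs ! j])"
    using assms(2,3) by (simp add: agree_def cube_def take_Suc_0_drop)
qed

lemma represented_line:
  assumes "cube_cat S" "k < length x"
  shows "represented S 1 (length x) (\<lambda>t. x[k := hd t])"
proof (rule represented_agree)
  have "delta1star 1 (length (take k x) + (1 + length (drop (Suc k) x)))
      (\<lambda>t. take k x @ take 1 t @ drop (Suc k) x)"
    by (rule delta1star_prodI[OF delta1star_const
          delta1star_prodI[OF delta1star.ident delta1star_const]]) auto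
  moreover have "length (take k x) + (1 + length (drop (Suc k) x)) = length x"
    using assms(2) by simp
  ultimately show "represented S 1 (length x) (\<lambda>t. take k x @ take 1 t @ drop (Suc k) x)"
    using represented_delta1star[OF assms(1)] by metis
  show "agree 1 (\<lambda>t. take k x @ take 1 t @ drop (Suc k) x) (\<lambda>t. x[k := hd t])"
    using assms(2) by (auto simp: agree_def cube_def length_Suc_conv upd_conv_take_nth_drop)
qed

lemma represented_diagonal_of_two_changes:
  assumes S: "cube_cat S" and f: "S m n f" and xy: "one_dim_interval m x y"
    and ij: "i < j" "j < n" and changed: "f x ! i \<noteq> f y ! i" "f x ! j \<noteq> f y ! j"
  shows "represented S 1 2 (\<lambda>t. t @ t)"
proof -
  obtain k where k: "k < m" "\<not> x ! k" and y: "y = x[k := True]"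
    using one_dim_interval_update[OF xy] .
  have x: "x \<in> cube m" "y \<in> cube m" "cleq x y" using xy by (auto simp: one_dim_interval_def)
  have "f x \<in> cube n" "f y \<in> cube n" "cleq (f x) (f y)" using cube_cat_hom_mono[OF S f x] .
  then have "f x ! i \<le> f y ! i" "f x ! j \<le> f y ! j"
    using ij by (auto simp: cube_def cleq_iff_nth)
  with changed have fxy: "\<not> f x ! i" "f y ! i" "\<not> f x ! j" "f y ! j" by auto
  let ?line = "\<lambda>t. x[k := hd t]" and ?pair = "\<lambda>zs. [zs ! i, zs ! j]"
  have "represented S 1 m ?line"
    using represented_line[OF S, of k x] k(1) x(1) by (simp add: cube_def)
  then have "represented S 1 n (f \<circ> ?line)"
    by (rule represented_comp[OF S _ represented_hom[of S, OF f]])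
  then have "represented S 1 2 (?pair \<circ> (f \<circ> ?line))"
    by (rule represented_comp[OF S _ represented_pair[OF S ij]])
  moreover have "agree 1 (?pair \<circ> (f \<circ> ?line)) (\<lambda>t. t @ t)"
    unfolding agree_def
  proof
    fix t :: "bool list" assume "t \<in> cube 1"
    then obtain b where t: "t = [b]" by (auto simp: cube_def length_Suc_conv)
    have "?line [False] = x" "?line [True] = y"
      using k y x(1) by (simp_all add: cube_def list_update_same_conv)
    then show "(?pair \<circ> (f \<circ> ?line)) t = t @ t" using t fxy by (cases b) simp_all
  qed
  ultimately show ?thesis by (rule represented_agree)
qed

theorem mainTheorem6:
  fixes S :: "nat \<Rightarrow> nat \<Rightarrow> (bool list \<Rightarrow> bool list) \<Rightarrow> bool"
  assumes "cube_cat S"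
  shows "(\<forall>m n f. S m n f \<longrightarrow>
            (\<forall>x y. one_dim_interval m x y \<longrightarrow> is_interval n (f ` {x, y})))
         \<longleftrightarrow> \<not> (\<exists>f. S 1 2 f \<and> agree 1 f (\<lambda>x. x @ x))"
proof
  assume intervals: "\<forall>m n f. S m n f \<longrightarrow>
    (\<forall>x y. one_dim_interval m x y \<longrightarrow> is_interval n (f ` {x, y}))"
  show "\<not> (\<exists>f. S 1 2 f \<and> agree 1 f (\<lambda>x. x @ x))"
  proof
    assume "\<exists>f. S 1 2 f \<and> agree 1 f (\<lambda>x. x @ x)"
    then obtain f where f: "S 1 2 f" "agree 1 f (\<lambda>x. x @ x)" by blast
    then have "f ` {[False], [True]} = {[False, False], [True, True]}"
      by (simp add: agree_def cube_def)
    with f(1) intervals one_dim_interval_unit diagonal_not_interval show False by metis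
  qed
next
  assume no_diagonal: "\<not> (\<exists>f. S 1 2 f \<and> agree 1 f (\<lambda>x. x @ x))"
  show "\<forall>m n f. S m n f \<longrightarrow>
    (\<forall>x y. one_dim_interval m x y \<longrightarrow> is_interval n (f ` {x, y}))"
  proof (intro allI impI)
    fix m n f x y assume f: "S m n f" and xy: "one_dim_interval m x y"
    then have "f x \<in> cube n" "cleq (f x) (f y)"
      using cube_cat_hom_mono[OF assms f] by (auto simp: one_dim_interval_def)
    moreover have "i = j"
      if "i < n" "j < n" "f x ! i \<noteq> f y ! i" "f x ! j \<noteq> f y ! j" for i j
    proof (rule ccontr)
      assume "i \<noteq> j"
      then have "represented S 1 2 (\<lambda>t. t @ t)"
        using represented_diagonal_of_two_changes[OF assms f xy] that by (metis linorder_neq_iff)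
      with no_diagonal show False unfolding represented_def by blast
    qed
    ultimately show "is_interval n (f ` {x, y})" using is_interval_endpoints by simp
  qed
qed

end
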